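(* Every strict gammoid has weak canonical bases over closed sets. That is, if $\mathcal A=(A,\mathrm{cl})$ is a matroid with a presentation $(A;R)\in\mathcal C$, $B$ is a closed set of $\mathcal A$ and $\bar a$ is a finite tuple of elements of $A$, then there is a closed set $B_0\subseteq B$ such that for every closed set $B_1\subseteq B$: $d(\bar a/B_1)=d(\bar a/B)$ if and only if $B_0\subseteq B_1$.
   Context: A set system is a pair $(A;R)$ where $R$ is a set of finite non-empty subsets of $A$; for $X\subseteq A$, $R[X]=\{r\in R:r\subseteq X\}$ and $\delta(X)=|X|-|R[X]|$. $\mathcal C$ is the class of finite set systems with $\delta(X)\ge0$ for all $X\subseteq A$. For $(A;R)\in\mathcal C$, $d(X)=\min\{\delta(Y):X\subseteq Y\subseteq A\}$, $\mathrm{cl}(X)=\{y:d(X\cup\{y\})=d(X)\}$, and $PG(A;R)$ is the matroid $(A,\mathrm{cl})$ with rank function $d$; $(A;R)$ is a presentation of $\mathcal A$ if $PG(A;R)=\mathcal A$. Strict gammoids are exactly the matroids having such a presentation. A closed set is $F$ with $\mathrm{cl}(F)=F$. For a closed set $B$ and a finite tuple $\bar a$, $d(\bar a/B)=d(\bar aB)-d(B)$, where $\bar aB$ is the union of $B$ with the set of entries of $\bar a$. *)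

theory Defs
  imports Main
begin

definition set_system :: "'a set \<Rightarrow> 'a set set \<Rightarrow> bool" where
  "set_system A R \<longleftrightarrow> (\<forall>r\<in>R. finite r \<and> r \<noteq> {} \<and> r \<subseteq> A)"

definition Rsub :: "'a set set \<Rightarrow> 'a set \<Rightarrow> 'a set set" where
  "Rsub R X = {r \<in> R. r \<subseteq> X}"

definition delta :: "'a set set \<Rightarrow> 'a set \<Rightarrow> int" where
  "delta R X = int (card X) - int (card (Rsub R X))"

definition in_C :: "'a set \<Rightarrow> 'a set set \<Rightarrow> bool" where
  "in_C A R \<longleftrightarrow> finite A \<and> set_system A R \<and> (\<forall>X. X \<subseteq> A \<longrightarrow> delta R X \<ge> 0)"

definition dd :: "'a set \<Rightarrow> 'a set set \<Rightarrow> 'a set \<Rightarrow> int" where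
  "dd A R X = Min {delta R Y | Y. X \<subseteq> Y \<and> Y \<subseteq> A}"

definition cl :: "'a set \<Rightarrow> 'a set set \<Rightarrow> 'a set \<Rightarrow> 'a set" where
  "cl A R X = {y \<in> A. dd A R (X \<union> {y}) = dd A R X}"

definition closed_set :: "'a set \<Rightarrow> 'a set set \<Rightarrow> 'a set \<Rightarrow> bool" where
  "closed_set A R F \<longleftrightarrow> F \<subseteq> A \<and> cl A R F = F"

definition dd_rel :: "'a set \<Rightarrow> 'a set set \<Rightarrow> 'a list \<Rightarrow> 'a set \<Rightarrow> int" where
  "dd_rel A R as B = dd A R (set as \<union> B) - dd A R B"

end

theory Submission
  imports Defs
begin

(* The rank d(X) = min {delta(Y) | X <= Y <= A} inherits submodularity from delta, which
   is in fact modular up to a nonnegative "crossing" term: delta(Y) + delta(Z) =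
   delta(Y u Z) + delta(Y n Z) + #(relations inside Y u Z but inside neither Y nor Z).
   Fix a finite set X (the entries of the tuple) and a closed set B.  By submodularity the
   relative rank d(X/B1) only grows when the closed base B1 <= B shrinks, so the closed
   B1 <= B with d(X/B1) = d(X/B) are exactly the "good" ones.  The key step is that the
   good sets are closed under intersection: a rank-attaining superset C_i of X u B_i
   meets B exactly in B_i, which bounds the crossing term of B1, B2 by that of C1, C2,
   and the modular identity then gives d(X/(B1 n B2)) <= d(X/B).  The canonical base B0 is
   the intersection of all good sets; it is good itself since there are finitely many. *)

definition crossing :: "'a set set \<Rightarrow> 'a set \<Rightarrow> 'a set \<Rightarrow> nat" where
  "crossing R Y Z = card (Rsub R (Y \<union> Z) - (Rsub R Y \<union> Rsub R Z))"

text \<open>\<open>delta\<close> is modular up to the crossing count (inclusion--exclusion on both terms).\<close>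
lemma delta_modular_crossing:
  assumes "finite R" and "finite Y" and "finite Z"
  shows "delta R Y + delta R Z = delta R (Y \<union> Z) + delta R (Y \<inter> Z) + int (crossing R Y Z)"
proof -
  have fin: "finite (Rsub R W)" for W using \<open>finite R\<close> by (simp add: Rsub_def)
  have Rsub_Int: "Rsub R (Y \<inter> Z) = Rsub R Y \<inter> Rsub R Z" by (auto simp: Rsub_def)
  have sub: "Rsub R Y \<union> Rsub R Z \<subseteq> Rsub R (Y \<union> Z)" by (auto simp: Rsub_def)
  have "card (Y \<union> Z) + card (Y \<inter> Z) = card Y + card Z"
    using card_Un_Int assms(2,3) by metis
  moreover have "card (Rsub R Y \<union> Rsub R Z) + card (Rsub R Y \<inter> Rsub R Z)
                   = card (Rsub R Y) + card (Rsub R Z)"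
    using card_Un_Int fin by metis
  moreover have "card (Rsub R (Y \<union> Z)) = crossing R Y Z + card (Rsub R Y \<union> Rsub R Z)"
    unfolding crossing_def using card_Diff_subset[OF _ sub] card_mono[OF _ sub] fin
    by (metis le_add_diff_inverse2 finite_Un)
  ultimately show ?thesis unfolding delta_def Rsub_Int by linarith
qed

lemma crossing_trace_le:
  assumes "finite R" and "C1 \<inter> B = B1" and "C2 \<inter> B = B2"
  shows "crossing R B1 B2 \<le> crossing R C1 C2"
  unfolding crossing_def
proof (rule card_mono)
  show "finite (Rsub R (C1 \<union> C2) - (Rsub R C1 \<union> Rsub R C2))"
    using \<open>finite R\<close> by (simp add: Rsub_def)
  show "Rsub R (B1 \<union> B2) - (Rsub R B1 \<union> Rsub R B2) \<subseteq> Rsub R (C1 \<union> C2) - (Rsub R C1 \<union> Rsub R C2)"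
    using assms(2,3) by (auto simp: Rsub_def)
qed

lemma Inter_mem_if_Int_closed:
  assumes "finite G" and "G \<noteq> {}" and "\<And>x y. x \<in> G \<Longrightarrow> y \<in> G \<Longrightarrow> x \<inter> y \<in> G"
  shows "\<Inter> G \<in> G"
proof -
  have "F \<subseteq> G \<Longrightarrow> \<Inter> F \<in> G" if "finite F" "F \<noteq> {}" for F
    using that by (induction F rule: finite_ne_induct) (auto intro: assms(3))
  then show ?thesis using assms by auto
qed

text \<open>A fixed presentation \<open>(A;R) \<in> \<C>\<close>; \<open>d\<close> is the rank of \<open>PG(A;R)\<close>.\<close>
locale presentation =
  fixes A :: "'a set" and R :: "'a set set"
  assumes in_C: "in_C A R"
begin

abbreviation d :: "'a set \<Rightarrow> int" where "d \<equiv> dd A R"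
abbreviation closed :: "'a set \<Rightarrow> bool" where "closed \<equiv> closed_set A R"

lemma finite_A: "finite A"
  using in_C by (simp add: in_C_def)

lemma finite_R: "finite R"
proof -
  have "R \<subseteq> Pow A" using in_C by (auto simp: in_C_def set_system_def)
  then show ?thesis using finite_A by (meson finite_Pow_iff finite_subset)
qed

text \<open>Dropping the (nonnegative) crossing count, \<open>delta\<close> is submodular.\<close>
lemma delta_submodular:
  assumes "Y \<subseteq> A" and "Z \<subseteq> A"
  shows "delta R (Y \<union> Z) + delta R (Y \<inter> Z) \<le> delta R Y + delta R Z"
proof -
  have "finite Y" "finite Z" using assms finite_A by (auto intro: finite_subset)
  from delta_modular_crossing[OF finite_R this] show ?thesis by linarith
qed

lemma finite_deltas_above: "finite {delta R Y | Y. X \<subseteq> Y \<and> Y \<subseteq> A}"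
proof -
  have "{delta R Y | Y. X \<subseteq> Y \<and> Y \<subseteq> A} \<subseteq> delta R ` Pow A" by auto
  then show ?thesis using finite_A by (meson finite_Pow_iff finite_imageI finite_subset)
qed

lemma dd_le_delta:
  assumes "X \<subseteq> Y" and "Y \<subseteq> A"
  shows "d X \<le> delta R Y"
  unfolding dd_def using assms by (intro Min_le[OF finite_deltas_above]) blast

lemma dd_attained:
  assumes "X \<subseteq> A"
  obtains Y where "X \<subseteq> Y" and "Y \<subseteq> A" and "delta R Y = d X"
proof -
  have "d X \<in> {delta R Y | Y. X \<subseteq> Y \<and> Y \<subseteq> A}"
    unfolding dd_def using assms by (intro Min_in[OF finite_deltas_above]) blast
  then show ?thesis using that by auto
qed

text \<open>Monotonicity and submodularity of the rank follow by comparing attaining supersets.\<close>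
lemma dd_mono:
  assumes "X \<subseteq> Y" and "Y \<subseteq> A"
  shows "d X \<le> d Y"
proof -
  obtain M where "Y \<subseteq> M" "M \<subseteq> A" "delta R M = d Y" using dd_attained[OF assms(2)] .
  then show ?thesis using dd_le_delta[of X M] assms(1) by simp
qed

lemma dd_submodular:
  assumes "Y \<subseteq> A" and "Z \<subseteq> A"
  shows "d (Y \<union> Z) + d (Y \<inter> Z) \<le> d Y + d Z"
proof -
  obtain MY where MY: "Y \<subseteq> MY" "MY \<subseteq> A" "delta R MY = d Y" using dd_attained[OF assms(1)] .
  obtain MZ where MZ: "Z \<subseteq> MZ" "MZ \<subseteq> A" "delta R MZ = d Z" using dd_attained[OF assms(2)] .
  have "d (Y \<union> Z) \<le> delta R (MY \<union> MZ)" using MY MZ by (intro dd_le_delta) auto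
  moreover have "d (Y \<inter> Z) \<le> delta R (MY \<inter> MZ)" using MY MZ by (intro dd_le_delta) auto
  ultimately show ?thesis using delta_submodular[OF MY(2) MZ(2)] MY(3) MZ(3) by linarith
qed

lemma rel_rank_antitone:
  assumes "X \<subseteq> A" and "Y \<subseteq> Z" and "Z \<subseteq> A"
  shows "d (X \<union> Z) - d Z \<le> d (X \<union> Y) - d Y"
proof -
  have "X \<union> Y \<union> Z = X \<union> Z" using assms(2) by blast
  then have "d (X \<union> Z) + d ((X \<union> Y) \<inter> Z) \<le> d (X \<union> Y) + d Z"
    using dd_submodular[of "X \<union> Y" Z] assms by auto
  moreover have "d Y \<le> d ((X \<union> Y) \<inter> Z)" using assms by (intro dd_mono) auto
  ultimately show ?thesis by linarith
qed

lemma rank_witness_in_cl: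
  assumes "X \<subseteq> Y" and "Y \<subseteq> A" and "delta R Y = d X"
  shows "Y \<subseteq> cl A R X"
proof
  fix y assume y: "y \<in> Y"
  have "d (X \<union> {y}) \<le> delta R Y" using assms(1,2) y by (intro dd_le_delta) auto
  moreover have "d X \<le> d (X \<union> {y})" using assms(1,2) y by (intro dd_mono) auto
  ultimately show "y \<in> cl A R X" using assms y unfolding cl_def by auto
qed

lemma closed_delta_eq_dd:
  assumes "closed B"
  shows "delta R B = d B"
proof -
  have "B \<subseteq> A" using assms by (simp add: closed_set_def)
  then obtain Y where Y: "B \<subseteq> Y" "Y \<subseteq> A" "delta R Y = d B" by (rule dd_attained)
  then have "Y \<subseteq> B" using rank_witness_in_cl[OF Y] assms by (simp add: closed_set_def)
  then show ?thesis using Y by auto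
qed

lemma cl_subset_closed:
  assumes "closed G" and "Z \<subseteq> G"
  shows "cl A R Z \<subseteq> G"
proof
  fix y assume y: "y \<in> cl A R Z"
  have GA: "G \<subseteq> A" using assms(1) by (simp add: closed_set_def)
  have yA: "y \<in> A" and same: "d (Z \<union> {y}) = d Z" using y by (auto simp: cl_def)
  have "G \<union> (Z \<union> {y}) = G \<union> {y}" using assms(2) by blast
  then have "d (G \<union> {y}) + d (G \<inter> (Z \<union> {y})) \<le> d G + d (Z \<union> {y})"
    using dd_submodular[of G "Z \<union> {y}"] GA assms(2) yA by auto
  moreover have "d Z \<le> d (G \<inter> (Z \<union> {y}))" using GA assms(2) by (intro dd_mono) auto
  moreover have "d G \<le> d (G \<union> {y})" using GA yA by (intro dd_mono) auto
  ultimately have "d (G \<union> {y}) = d G" using same by linarith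
  then have "y \<in> cl A R G" using yA by (simp add: cl_def)
  then show "y \<in> G" using assms(1) by (simp add: closed_set_def)
qed

lemma closed_Int:
  assumes "closed F1" and "closed F2"
  shows "closed (F1 \<inter> F2)"
proof -
  have sub: "F1 \<inter> F2 \<subseteq> A" using assms by (auto simp: closed_set_def)
  have "cl A R (F1 \<inter> F2) \<subseteq> F1" "cl A R (F1 \<inter> F2) \<subseteq> F2"
    by (intro cl_subset_closed assms Int_lower1 Int_lower2)+
  then have "cl A R (F1 \<inter> F2) \<subseteq> F1 \<inter> F2" by blast
  moreover have "F1 \<inter> F2 \<subseteq> cl A R (F1 \<inter> F2)"
    using sub unfolding cl_def by (auto simp: insert_absorb)
  ultimately show ?thesis using sub unfolding closed_set_def by blast
qed

lemma rank_witness_trace: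
  assumes B: "closed B" and B1: "closed B1" "B1 \<subseteq> B" and X: "X \<subseteq> A"
    and same: "d (X \<union> B1) - d B1 = d (X \<union> B) - d B"
    and C: "X \<union> B1 \<subseteq> C" "C \<subseteq> A" "delta R C = d (X \<union> B1)"
  shows "C \<inter> B = B1"
proof -
  have BA: "B \<subseteq> A" using B by (simp add: closed_set_def)
  have "delta R (C \<union> B) + delta R (C \<inter> B) \<le> delta R C + delta R B"
    using delta_submodular[OF C(2) BA] .
  moreover have "d (X \<union> B) \<le> delta R (C \<union> B)" using C BA by (intro dd_le_delta) auto
  moreover have "d B1 \<le> delta R (C \<inter> B)" using C B1 BA by (intro dd_le_delta) auto
  ultimately have "delta R (C \<inter> B) = d B1"
    using closed_delta_eq_dd[OF B] C(3) same by linarith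
  then have "C \<inter> B \<subseteq> cl A R B1" using C B1 by (intro rank_witness_in_cl) auto
  then show ?thesis using B1 C by (auto simp: closed_set_def)
qed

text \<open>With attaining
  supersets \<open>C\<^sub>i\<close> of \<open>X \<union> B\<^sub>i\<close> (which meet \<open>B\<close> in \<open>B\<^sub>i\<close>), add the modular
  identities for \<open>C\<^sub>1, C\<^sub>2\<close> and \<open>B\<^sub>1, B\<^sub>2\<close>, compare the crossing counts, and bound
  \<open>delta (C\<^sub>1 \<union> C\<^sub>2)\<close> from below by submodularity against \<open>B\<close>.\<close>
lemma rel_rank_Int:
  assumes B: "closed B" and X: "X \<subseteq> A"
    and B1: "closed B1" "B1 \<subseteq> B" "d (X \<union> B1) - d B1 = d (X \<union> B) - d B"
    and B2: "closed B2" "B2 \<subseteq> B" "d (X \<union> B2) - d B2 = d (X \<union> B) - d B"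
  shows "d (X \<union> (B1 \<inter> B2)) - d (B1 \<inter> B2) = d (X \<union> B) - d B"
proof -
  have BA: "B \<subseteq> A" using B by (simp add: closed_set_def)
  obtain C1 where C1: "X \<union> B1 \<subseteq> C1" "C1 \<subseteq> A" "delta R C1 = d (X \<union> B1)"
    using dd_attained[of "X \<union> B1"] X B1(2) BA by blast
  obtain C2 where C2: "X \<union> B2 \<subseteq> C2" "C2 \<subseteq> A" "delta R C2 = d (X \<union> B2)"
    using dd_attained[of "X \<union> B2"] X B2(2) BA by blast
  have tr1: "C1 \<inter> B = B1" using rank_witness_trace[OF B B1(1,2) X B1(3) C1] .
  have tr2: "C2 \<inter> B = B2" using rank_witness_trace[OF B B2(1,2) X B2(3) C2] .
  have B12A: "B1 \<subseteq> A" "B2 \<subseteq> A" using B1 B2 BA by auto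
  have "delta R C1 + delta R C2 = delta R (C1 \<union> C2) + delta R (C1 \<inter> C2) + int (crossing R C1 C2)"
    using C1 C2 finite_A by (intro delta_modular_crossing finite_R) (auto intro: finite_subset)
  moreover have "delta R B1 + delta R B2
                   = delta R (B1 \<union> B2) + delta R (B1 \<inter> B2) + int (crossing R B1 B2)"
    using B12A finite_A by (intro delta_modular_crossing finite_R) (auto intro: finite_subset)
  moreover have "crossing R B1 B2 \<le> crossing R C1 C2"
    using crossing_trace_le[OF finite_R tr1 tr2] .
  moreover have "delta R (C1 \<union> C2 \<union> B) + delta R (B1 \<union> B2) \<le> delta R (C1 \<union> C2) + delta R B"
    using delta_submodular[of "C1 \<union> C2" B] C1 C2 BA tr1 tr2 by (auto simp: Int_Un_distrib2)
  moreover have "d (X \<union> B) \<le> delta R (C1 \<union> C2 \<union> B)" using C1 C2 BA by (intro dd_le_delta) auto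
  moreover have "d (X \<union> (B1 \<inter> B2)) \<le> delta R (C1 \<inter> C2)" using C1 C2 by (intro dd_le_delta) auto
  moreover have "d (X \<union> B) - d B \<le> d (X \<union> (B1 \<inter> B2)) - d (B1 \<inter> B2)"
    using X B1(2) BA by (intro rel_rank_antitone) auto
  moreover note closed_delta_eq_dd[OF B] closed_delta_eq_dd[OF B1(1)]
    closed_delta_eq_dd[OF B2(1)] closed_delta_eq_dd[OF closed_Int[OF B1(1) B2(1)]]
  ultimately show ?thesis using B1(3) B2(3) C1(3) C2(3) by linarith
qed

lemma weak_canonical_base:
  assumes B: "closed B" and X: "X \<subseteq> A"
  shows "\<exists>B0. closed B0 \<and> B0 \<subseteq> B \<and>
           (\<forall>B1. closed B1 \<and> B1 \<subseteq> B \<longrightarrow> (d (X \<union> B1) - d B1 = d (X \<union> B) - d B \<longleftrightarrow> B0 \<subseteq> B1))"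
proof -
  define good where "good = {B1. closed B1 \<and> B1 \<subseteq> B \<and> d (X \<union> B1) - d B1 = d (X \<union> B) - d B}"
  have "finite good"
    using B finite_A by (auto simp: good_def closed_set_def intro: finite_subset[of _ "Pow A"])
  moreover have "good \<noteq> {}" using B by (auto simp: good_def)
  moreover have "B1 \<inter> B2 \<in> good" if "B1 \<in> good" "B2 \<in> good" for B1 B2
    using that closed_Int rel_rank_Int[OF B X] by (auto simp: good_def)
  ultimately have B0_good: "\<Inter> good \<in> good" by (rule Inter_mem_if_Int_closed)
  show ?thesis
  proof (intro exI conjI allI impI)
    show "closed (\<Inter> good)" "\<Inter> good \<subseteq> B" using B0_good by (auto simp: good_def)
    fix B1 assume B1: "closed B1 \<and> B1 \<subseteq> B"
    then have B1A: "B1 \<subseteq> A" using B by (auto simp: closed_set_def)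
    show "d (X \<union> B1) - d B1 = d (X \<union> B) - d B \<longleftrightarrow> \<Inter> good \<subseteq> B1"
    proof
      assume "d (X \<union> B1) - d B1 = d (X \<union> B) - d B"
      then have "B1 \<in> good" using B1 by (simp add: good_def)
      then show "\<Inter> good \<subseteq> B1" by blast
    next
      assume B0_sub: "\<Inter> good \<subseteq> B1"
      have "d (X \<union> B1) - d B1 \<le> d (X \<union> \<Inter> good) - d (\<Inter> good)"
        using rel_rank_antitone[OF X B0_sub B1A] .
      moreover have "d (X \<union> B) - d B \<le> d (X \<union> B1) - d B1"
        using X B1 B by (intro rel_rank_antitone) (auto simp: closed_set_def)
      ultimately show "d (X \<union> B1) - d B1 = d (X \<union> B) - d B"
        using B0_good by (simp add: good_def)
    qed
  qed
qed

end

theorem theorem6p1: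
  fixes A :: "'a set" and R :: "'a set set" and B :: "'a set" and as :: "'a list"
  assumes "in_C A R"
    and "closed_set A R B"
    and "set as \<subseteq> A"
  shows "\<exists>B0. closed_set A R B0 \<and> B0 \<subseteq> B \<and>
           (\<forall>B1. closed_set A R B1 \<and> B1 \<subseteq> B \<longrightarrow>
              (dd_rel A R as B1 = dd_rel A R as B \<longleftrightarrow> B0 \<subseteq> B1))"
proof -
  interpret presentation A R by (rule presentation.intro) (rule assms(1))
  show ?thesis
    unfolding dd_rel_def using weak_canonical_base[OF assms(2,3)] .
qed

end
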